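(* The numbers $D_2(\boldsymbol m)$, $\boldsymbol m\in\mathscr F$, defined by $D_2(\boldsymbol 0):=1$ and $D_2(\boldsymbol m):=\sum_{\mathfrak u\subseteq{\rm supp}(\boldsymbol m),\,0\ne|\mathfrak u|\le2}D_2(\boldsymbol m-\boldsymbol e_{\mathfrak u})$ for $\boldsymbol m\ne\boldsymbol 0$ (with $\boldsymbol e_{\mathfrak u}=\sum_{j\in\mathfrak u}\boldsymbol e_j$), satisfy $$D_2(\boldsymbol m)\le|\boldsymbol m|!\,a_{|\boldsymbol m|}\quad\text{for all }\boldsymbol m\in\mathscr F,\qquad a_k:=\frac{(1+\sqrt3)^{k+1}-(1-\sqrt3)^{k+1}}{2^{k+1}\sqrt3},\ k\ge0.$$
   Context: $\mathscr F$ is the set of finitely supported multi-indices in $\mathbb N_0^{\mathbb N}$; ${\rm supp}(\boldsymbol m)=\{j:m_j\ne0\}$, $|\boldsymbol m|=\sum m_j$, $\boldsymbol e_j$ the $j$th unit multi-index. *)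

theory Defs
  imports "HOL-Analysis.Analysis" "HOL-Library.Poly_Mapping"
begin

text \<open>Finitely supported multi-indices F are the poly_mapping type from nat to nat.
  supp m = Poly_Mapping.keys m; |m| = sum of entries.\<close>

definition mabs :: "(nat \<Rightarrow>\<^sub>0 nat) \<Rightarrow> nat" where
  "mabs m = (\<Sum>j\<in>Poly_Mapping.keys m. Poly_Mapping.lookup m j)"

definition e_set :: "nat set \<Rightarrow> (nat \<Rightarrow>\<^sub>0 nat)" where
  "e_set u = (\<Sum>j\<in>u. Poly_Mapping.single j 1)"

lemma mabs_decr:
  assumes "m \<noteq> 0" "u \<subseteq> Poly_Mapping.keys m" "u \<noteq> {}"
  shows "mabs (m - e_set u) < mabs m"
proof -
  have fu: "finite u" using assms(2) finite_subset finite_keys by blast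
  have lk: "Poly_Mapping.lookup (e_set u) j = (if j \<in> u then 1 else 0)" for j
    unfolding e_set_def using fu
    by (induction u rule: finite_induct) (auto simp: lookup_add lookup_single when_def)
  have ms: "mabs p = (\<Sum>j\<in>Poly_Mapping.keys m. Poly_Mapping.lookup p j)" if "Poly_Mapping.keys p \<subseteq> Poly_Mapping.keys m" for p
    unfolding mabs_def using that
    by (intro sum.mono_neutral_left) (auto simp: in_keys_iff)
  have sub: "Poly_Mapping.keys (m - e_set u) \<subseteq> Poly_Mapping.keys m"
    by (auto simp: in_keys_iff lookup_minus)
  obtain j0 where j0: "j0 \<in> u" using assms(3) by auto
  have "mabs (m - e_set u) = (\<Sum>j\<in>Poly_Mapping.keys m. Poly_Mapping.lookup m j - Poly_Mapping.lookup (e_set u) j)"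
    using ms[OF sub] by (simp add: lookup_minus)
  also have "\<dots> < (\<Sum>j\<in>Poly_Mapping.keys m. Poly_Mapping.lookup m j)"
  proof (rule sum_strict_mono_ex1)
    show "finite (Poly_Mapping.keys m)" by simp
    show "\<forall>x\<in>Poly_Mapping.keys m. Poly_Mapping.lookup m x - Poly_Mapping.lookup (e_set u) x \<le> Poly_Mapping.lookup m x" by auto
    show "\<exists>a\<in>Poly_Mapping.keys m. Poly_Mapping.lookup m a - Poly_Mapping.lookup (e_set u) a < Poly_Mapping.lookup m a"
      using j0 assms(2) by (intro bexI[of _ j0]) (auto simp: lk in_keys_iff)
  qed
  finally show ?thesis by (simp add: mabs_def)
qed

function D2 :: "(nat \<Rightarrow>\<^sub>0 nat) \<Rightarrow> nat" where
  "D2 m = (if m = 0 then 1 else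
     (\<Sum>u\<in>{u. u \<subseteq> Poly_Mapping.keys m \<and> u \<noteq> {} \<and> card u \<le> 2}. D2 (m - e_set u)))"
  by auto
termination
  by (relation "Wellfounded.measure mabs") (auto intro: mabs_decr)

definition a_seq :: "nat \<Rightarrow> real" where
  "a_seq k = ((1 + sqrt 3) ^ (k + 1) - (1 - sqrt 3) ^ (k + 1)) / (2 ^ (k + 1) * sqrt 3)"

end

theory Submission
  imports Defs
begin

text \<open>Let \<open>n = |m|\<close>, \<open>s = |supp m| \<le> n\<close> and \<open>b k = k! a k\<close>. The recursion for \<open>D\<^sub>2(m)\<close>
  has \<open>s\<close> terms of order \<open>n - 1\<close> and \<open>s choose 2\<close> terms of order \<open>n - 2\<close>, so by induction
  \<open>D\<^sub>2(m) \<le> n b(n - 1) + (n choose 2) b(n - 2)\<close>. The right-hand side equals \<open>b n\<close> because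
  \<open>a\<close> solves \<open>a(k + 2) = a(k + 1) + a(k)/2\<close> with \<open>a 0 = a 1 = 1\<close>, a recurrence whose
  characteristic roots are \<open>(1 \<plusminus> \<surd>3)/2\<close>.\<close>

lemma lookup_e_set: "finite u \<Longrightarrow> Poly_Mapping.lookup (e_set u) j = (if j \<in> u then 1 else 0)"
  unfolding e_set_def
  by (induction u rule: finite_induct) (auto simp: lookup_add lookup_single when_def)

lemma mabs_eq_sum_over_superset:
  assumes "finite K" "Poly_Mapping.keys p \<subseteq> K"
  shows "mabs p = (\<Sum>j\<in>K. Poly_Mapping.lookup p j)"
  unfolding mabs_def using assms by (intro sum.mono_neutral_left) (auto simp: in_keys_iff)

lemma card_keys_le_mabs: "card (Poly_Mapping.keys m) \<le> mabs m"
proof -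
  have "card (Poly_Mapping.keys m) = (\<Sum>j\<in>Poly_Mapping.keys m. 1)" by simp
  also have "\<dots> \<le> mabs m"
    unfolding mabs_def by (rule sum_mono) (auto simp: in_keys_iff)
  finally show ?thesis .
qed

lemma mabs_minus_e_set:
  assumes "u \<subseteq> Poly_Mapping.keys m"
  shows "mabs (m - e_set u) = mabs m - card u"
proof -
  let ?K = "Poly_Mapping.keys m"
  have fu: "finite u" using assms finite_keys by (rule finite_subset)
  have "Poly_Mapping.keys (m - e_set u) \<subseteq> ?K"
    by (auto simp: in_keys_iff lookup_minus)
  then have "mabs (m - e_set u) = (\<Sum>j\<in>?K. Poly_Mapping.lookup m j - Poly_Mapping.lookup (e_set u) j)"
    using mabs_eq_sum_over_superset[of ?K "m - e_set u"] by (simp add: lookup_minus)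
  also have "\<dots> = (\<Sum>j\<in>?K. Poly_Mapping.lookup m j) - (\<Sum>j\<in>?K. Poly_Mapping.lookup (e_set u) j)"
    by (rule sum_subtractf_nat) (use assms in \<open>auto simp: lookup_e_set[OF fu] in_keys_iff\<close>)
  also have "(\<Sum>j\<in>?K. Poly_Mapping.lookup (e_set u) j) = card u"
    using assms by (simp add: lookup_e_set[OF fu] sum.If_cases Int_absorb1)
  finally show ?thesis by (simp add: mabs_def)
qed

lemma power_Suc_Suc_if_square_eq:
  fixes x c :: "'a :: comm_ring_1"
  assumes "x ^ 2 = x + c"
  shows "x ^ Suc (Suc k) = x ^ Suc k + c * x ^ k"
proof -
  have "x ^ Suc (Suc k) = x ^ 2 * x ^ k" by (simp add: power2_eq_square)
  also have "\<dots> = x ^ Suc k + c * x ^ k" by (simp add: assms algebra_simps)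
  finally show ?thesis .
qed

lemma a_seq_eq_roots:
  "a_seq k = (((1 + sqrt 3) / 2) ^ (k + 1) - ((1 - sqrt 3) / 2) ^ (k + 1)) / sqrt 3"
  unfolding a_seq_def power_divide by (simp add: field_simps)

lemma a_seq_0: "a_seq 0 = 1"
  by (simp add: a_seq_def)

lemma a_seq_1: "a_seq 1 = 1"
proof -
  have "(1 + sqrt 3) * (1 + sqrt 3) - (1 - sqrt 3) * (1 - sqrt 3) = 4 * sqrt 3"
    by (simp add: algebra_simps)
  then show ?thesis by (simp add: a_seq_def power2_eq_square)
qed

lemma a_seq_Suc_Suc: "a_seq (Suc (Suc k)) = a_seq (Suc k) + a_seq k / 2"
proof -
  have roots: "((1 + sqrt 3) / 2) ^ 2 = (1 + sqrt 3) / 2 + 1 / 2"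
              "((1 - sqrt 3) / 2) ^ 2 = (1 - sqrt 3) / 2 + 1 / 2"
    by (simp_all add: power2_eq_square field_simps)
  show ?thesis
    unfolding a_seq_eq_roots Suc_eq_plus1[symmetric]
      power_Suc_Suc_if_square_eq[OF roots(1)] power_Suc_Suc_if_square_eq[OF roots(2)]
    by (simp add: field_simps)
qed

lemma a_seq_ge_1: "a_seq k \<ge> 1"
  by (induction k rule: induct_nat_012) (simp_all add: a_seq_0 a_seq_1[unfolded One_nat_def] a_seq_Suc_Suc)

lemma fact_a_seq_recurrence:
  "fact (k + 2) * a_seq (k + 2)
     = real (k + 2) * (fact (k + 1) * a_seq (k + 1)) + real ((k + 2) choose 2) * (fact k * a_seq k)"
proof -
  have "real ((k + 2) choose 2) = (real k + 2) * (real k + 1) / 2"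
    by (simp add: choose_two real_of_nat_div field_simps)
  moreover have "(fact (k + 2) :: real) = (real k + 2) * ((real k + 1) * fact k)"
    by (simp add: algebra_simps)
  moreover have "(fact (k + 1) :: real) = (real k + 1) * fact k"
    by simp
  moreover have "a_seq (k + 2) = a_seq (k + 1) + a_seq k / 2"
    using a_seq_Suc_Suc[of k] by simp
  ultimately show ?thesis
    by (simp only: of_nat_add of_nat_numeral) (simp add: field_simps)
qed

lemma fact_a_seq_bound_step:
  assumes "s \<le> n + 1"
  shows "real s * (fact n * a_seq n) + real (s choose 2) * (fact (n - 1) * a_seq (n - 1))
           \<le> fact (n + 1) * a_seq (n + 1)"
proof (cases n)
  case 0
  with assms have "s \<le> 1" by simp
  then have "s choose 2 = 0" by simp
  with \<open>s \<le> 1\<close> show ?thesis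
    by (simp add: 0 a_seq_0 a_seq_1[unfolded One_nat_def] del: binomial_eq_0_iff)
next
  case (Suc k)
  have nonneg: "0 \<le> fact j * a_seq j" for j
    using a_seq_ge_1[of j] by simp
  have "real s * (fact n * a_seq n) + real (s choose 2) * (fact (n - 1) * a_seq (n - 1))
          \<le> real (n + 1) * (fact n * a_seq n) + real ((n + 1) choose 2) * (fact (n - 1) * a_seq (n - 1))"
    using assms binomial_right_mono[of s "n + 1" 2]
    by (intro add_mono mult_right_mono nonneg) simp_all
  also have "\<dots> = fact (n + 1) * a_seq (n + 1)"
    using Suc fact_a_seq_recurrence[of k] by simp
  finally show ?thesis .
qed

lemma sum_nonempty_subsets_card_le_2:
  fixes f :: "'a set \<Rightarrow> real"
  assumes "finite K"
    and "\<And>u. u \<subseteq> K \<Longrightarrow> card u = 1 \<Longrightarrow> f u \<le> c\<^sub>1"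
    and "\<And>u. u \<subseteq> K \<Longrightarrow> card u = 2 \<Longrightarrow> f u \<le> c\<^sub>2"
  shows "(\<Sum>u\<in>{u. u \<subseteq> K \<and> u \<noteq> {} \<and> card u \<le> 2}. f u)
           \<le> real (card K) * c\<^sub>1 + real (card K choose 2) * c\<^sub>2"
proof -
  define S where "S j = {u. u \<subseteq> K \<and> card u = j}" for j
  have finite_S: "finite (S j)" for j
    unfolding S_def using assms(1) by (auto intro: finite_subset[of _ "Pow K"])
  have "{u. u \<subseteq> K \<and> u \<noteq> {} \<and> card u \<le> 2} = S 1 \<union> S 2"
    unfolding S_def using assms(1)
    by (auto simp: numeral_2_eq_2 le_Suc_eq card_eq_0_iff dest: finite_subset)
  then have "(\<Sum>u\<in>{u. u \<subseteq> K \<and> u \<noteq> {} \<and> card u \<le> 2}. f u) = sum f (S 1) + sum f (S 2)"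
    using finite_S by (simp add: sum.union_disjoint S_def disjoint_iff)
  also have "\<dots> \<le> real (card (S 1)) * c\<^sub>1 + real (card (S 2)) * c\<^sub>2"
    using assms(2,3) by (intro add_mono sum_bounded_above) (auto simp: S_def)
  also have "\<dots> = real (card K) * c\<^sub>1 + real (card K choose 2) * c\<^sub>2"
    unfolding S_def n_subsets[OF assms(1)] by simp
  finally show ?thesis .
qed

declare D2.simps [simp del]

theorem lemmaA2:
  fixes m :: "nat \<Rightarrow>\<^sub>0 nat"
  shows "real (D2 m) \<le> fact (mabs m) * a_seq (mabs m)"
proof (induction m rule: D2.induct)
  case (1 m)
  show ?case
  proof (cases "m = 0")
    case True
    then show ?thesis by (simp add: D2.simps mabs_def a_seq_0)
  next
    case False
    let ?K = "Poly_Mapping.keys m"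
    let ?U = "{u. u \<subseteq> ?K \<and> u \<noteq> {} \<and> card u \<le> 2}"
    have "card ?K \<noteq> 0" using False by simp
    with card_keys_le_mabs obtain n where n: "mabs m = n + 1" "card ?K \<le> n + 1"
      by (metis Suc_eq_plus1 not0_implies_Suc le_0_eq)
    have IH: "real (D2 (m - e_set u)) \<le> fact (n + 1 - card u) * a_seq (n + 1 - card u)"
      if "u \<in> ?U" for u
      using "1"[OF False that] mabs_minus_e_set[of u m] that n(1) by simp
    have "real (D2 m) = (\<Sum>u\<in>?U. real (D2 (m - e_set u)))"
      using False by (simp add: D2.simps[of m])
    also have "\<dots> \<le> real (card ?K) * (fact n * a_seq n)
                     + real (card ?K choose 2) * (fact (n - 1) * a_seq (n - 1))"
    proof (rule sum_nonempty_subsets_card_le_2)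
      fix u assume u: "u \<subseteq> ?K"
      show "real (D2 (m - e_set u)) \<le> fact n * a_seq n" if "card u = 1"
        using IH[of u] u that by fastforce
      show "real (D2 (m - e_set u)) \<le> fact (n - 1) * a_seq (n - 1)" if "card u = 2"
        using IH[of u] u that by fastforce
    qed simp
    also have "\<dots> \<le> fact (n + 1) * a_seq (n + 1)"
      using n(2) by (rule fact_a_seq_bound_step)
    finally show ?thesis using n(1) by simp
  qed
qed

end
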